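(* Let $f:\mathbb{D}\times\mathbb{D}\to[0,1)$ be given by $f(z_1,z_2)=|\varphi_{z_1}(z_2)|=\left|\frac{z_1-z_2}{1-\overline{z_1}z_2}\right|$, and let $D=\{(z,z):z\in\mathbb{D}\}$. Then: (1) $f|_{\mathbb{D}\times\mathbb{D}-D}:\mathbb{D}\times\mathbb{D}-D\to(0,1)$ is a submersion (regarding $\mathbb{D}\times\mathbb{D}$ as a real $4$-manifold); (2) $f$ defines a three-dimensional foliation $\mathscr{F}$ of $\mathbb{D}\times\mathbb{D}-D$ whose leaves are $\mathscr{F}_a=f^{-1}\{a\}$, $a\in(0,1)$; (3) each leaf $\mathscr{F}_a$ is a real $3$-manifold; (4) for each leaf $\mathscr{F}_a$, the action of $\mathbb{Z}_2=\{\pm1\}$ on $\mathbb{D}\times\mathbb{D}$ given by $(+1)\cdot(z_1,z_2)=(z_1,z_2)$, $(-1)\cdot(z_1,z_2)=(z_2,z_1)$ induces a free, properly discontinuous action on $\mathscr{F}_a$.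
   Context: $\mathbb{D}$ is the open unit disc in $\mathbb{C}$. For $\alpha\in\mathbb{D}$, $\varphi_\alpha(z)=\frac{\alpha-z}{1-\overline{\alpha}z}$. *)

theory Defs
  imports "HOL-Analysis.Analysis"
begin

definition unit_disc :: "complex set" where
  "unit_disc = ball 0 1"

definition phi :: "complex \<Rightarrow> complex \<Rightarrow> complex" where
  "phi \<alpha> z = (\<alpha> - z) / (1 - cnj \<alpha> * z)"

fun dirderivs :: "'a::real_normed_vector list \<Rightarrow> ('a \<Rightarrow> 'b::real_normed_vector) \<Rightarrow> 'a \<Rightarrow> 'b" where
  "dirderivs [] f = f"
| "dirderivs (v # vs) f = (\<lambda>x. frechet_derivative (dirderivs vs f) (at x) v)"

definition smooth_on :: "'a::euclidean_space set \<Rightarrow> ('a \<Rightarrow> 'b::real_normed_vector) \<Rightarrow> bool" where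
  "smooth_on U f \<longleftrightarrow> open U \<and> (\<forall>vs. \<forall>x\<in>U. dirderivs vs f differentiable (at x))"

definition submersion_on :: "'a::euclidean_space set \<Rightarrow> ('a \<Rightarrow> 'b::euclidean_space) \<Rightarrow> bool" where
  "submersion_on U f \<longleftrightarrow> smooth_on U f \<and> (\<forall>x\<in>U. surj (frechet_derivative f (at x)))"

definition diffeo_on :: "'a::euclidean_space set \<Rightarrow> ('a \<Rightarrow> 'b::euclidean_space) \<Rightarrow> bool" where
  "diffeo_on W h \<longleftrightarrow> open W \<and> inj_on h W \<and> open (h ` W) \<and> smooth_on W h
     \<and> smooth_on (h ` W) (inv_into W h)"

text \<open>Embedded submanifold of the ambient space modelled on 'b (slice charts into 'b \<times> 'c);
  its dimension is DIM('b).\<close>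
definition embedded_submanifold ::
  "'a::euclidean_space set \<Rightarrow> 'b::euclidean_space itself \<Rightarrow> 'c::euclidean_space itself \<Rightarrow> bool" where
  "embedded_submanifold M tb tc \<longleftrightarrow>
     (\<forall>p\<in>M. \<exists>W (h::'a \<Rightarrow> 'b \<times> 'c). p \<in> W \<and> diffeo_on W h \<and>
        h ` (M \<inter> W) = {y \<in> h ` W. snd y = 0})"

text \<open>A (smooth, regular) foliation of the open set U with leaf family L whose leaves
  have dimension DIM('b) and codimension DIM('c): L is a partition of U into nonempty
  connected sets, and around each point there is a foliation chart onto a convex open set
  of 'b \<times> 'c, mapping each connected component of (leaf \<inter> chart domain) onto a slice.\<close>
definition foliation ::
  "'a::euclidean_space set \<Rightarrow> 'a set set \<Rightarrow> 'b::euclidean_space itself \<Rightarrow> 'c::euclidean_space itself \<Rightarrow> bool" where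
  "foliation U L tb tc \<longleftrightarrow> open U \<and> \<Union>L = U \<and> (\<forall>A\<in>L. A \<noteq> {} \<and> connected A)
     \<and> (\<forall>A\<in>L. \<forall>B\<in>L. A \<noteq> B \<longrightarrow> A \<inter> B = {})
     \<and> (\<forall>p\<in>U. \<exists>W (h::'a \<Rightarrow> 'b \<times> 'c). p \<in> W \<and> W \<subseteq> U \<and> diffeo_on W h \<and> convex (h ` W)
          \<and> (\<forall>A\<in>L. \<forall>C\<in>components (A \<inter> W). \<exists>c. h ` C = {y \<in> h ` W. snd y = c}))"

definition swap_act :: "int \<Rightarrow> complex \<times> complex \<Rightarrow> complex \<times> complex" where
  "swap_act g p = (if g = 1 then p else (snd p, fst p))"

definition invariant_under :: "'g set \<Rightarrow> ('g \<Rightarrow> 'x \<Rightarrow> 'x) \<Rightarrow> 'x set \<Rightarrow> bool" where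
  "invariant_under G act X \<longleftrightarrow> (\<forall>g\<in>G. act g ` X \<subseteq> X)"

definition free_action :: "'g set \<Rightarrow> 'g \<Rightarrow> ('g \<Rightarrow> 'x \<Rightarrow> 'x) \<Rightarrow> 'x set \<Rightarrow> bool" where
  "free_action G e act X \<longleftrightarrow> (\<forall>g\<in>G. \<forall>x\<in>X. act g x = x \<longrightarrow> g = e)"

definition properly_discontinuous_action ::
  "'g set \<Rightarrow> 'g \<Rightarrow> ('g \<Rightarrow> 'x::topological_space \<Rightarrow> 'x) \<Rightarrow> 'x set \<Rightarrow> bool" where
  "properly_discontinuous_action G e act X \<longleftrightarrow>
     (\<forall>x\<in>X. \<exists>V. openin (top_of_set X) V \<and> x \<in> V \<and>
        (\<forall>g\<in>G. g \<noteq> e \<longrightarrow> act g ` V \<inter> V = {}))"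

end

theory Submission
  imports Defs
begin

text \<open>Since \<open>phi z\<^sub>1\<close> is an involution of the disc, \<open>(z\<^sub>1, z\<^sub>2) \<mapsto> (z\<^sub>1, phi z\<^sub>1 z\<^sub>2)\<close> is an involution
  of the bidisc in whose second coordinate \<open>w\<close> the function \<open>f\<close> becomes \<open>|w|\<close>. Hence each leaf is
  the image of the connected set \<open>unit_disc \<times> {|w| = a}\<close>, and near a point off the diagonal polar-type
  coordinates for \<open>w\<close> give an explicit chart with convex image in which \<open>f\<close> is the last coordinate;
  this chart is at once a submersion chart, a foliation chart and a slice chart for the leaves.
  Smoothness of the charts and their inverses follows from one closure property: functions built from
  constants and linear maps by arithmetic, inverses and real powers have derivatives of the same
  kind. The swap preserves \<open>f\<close> and has no fixed points off the diagonal, and the ball of radius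
  \<open>|z\<^sub>1 - z\<^sub>2|/2\<close> around \<open>(z\<^sub>1, z\<^sub>2)\<close> is disjoint from its image.\<close>

section \<open>Elementary smooth functions\<close>

inductive_set elem_fun :: "'a::real_normed_vector set \<Rightarrow> ('a \<Rightarrow> real) set" for U where
  const: "(\<lambda>x. c) \<in> elem_fun U"
| bounded_linear: "bounded_linear L \<Longrightarrow> L \<in> elem_fun U"
| add: "g \<in> elem_fun U \<Longrightarrow> h \<in> elem_fun U \<Longrightarrow> (\<lambda>x. g x + h x) \<in> elem_fun U"
| mult: "g \<in> elem_fun U \<Longrightarrow> h \<in> elem_fun U \<Longrightarrow> (\<lambda>x. g x * h x) \<in> elem_fun U"
| inverse: "g \<in> elem_fun U \<Longrightarrow> (\<forall>x\<in>U. g x \<noteq> 0) \<Longrightarrow> (\<lambda>x. inverse (g x)) \<in> elem_fun U"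
| powr: "g \<in> elem_fun U \<Longrightarrow> (\<forall>x\<in>U. g x > 0) \<Longrightarrow> (\<lambda>x. g x powr r) \<in> elem_fun U"
| cong: "g \<in> elem_fun U \<Longrightarrow> (\<forall>x\<in>U. h x = g x) \<Longrightarrow> h \<in> elem_fun U"

lemma elem_fun_diff: "g \<in> elem_fun U \<Longrightarrow> h \<in> elem_fun U \<Longrightarrow> (\<lambda>x. g x - h x) \<in> elem_fun U"
proof -
  assume "g \<in> elem_fun U" "h \<in> elem_fun U"
  then have "(\<lambda>x. g x + (-1) * h x) \<in> elem_fun U"
    by (intro elem_fun.add elem_fun.mult elem_fun.const)
  then show ?thesis by (rule elem_fun.cong) auto
qed

lemma elem_fun_sqrt: "g \<in> elem_fun U \<Longrightarrow> (\<forall>x\<in>U. g x > 0) \<Longrightarrow> (\<lambda>x. sqrt (g x)) \<in> elem_fun U"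
proof -
  assume g: "g \<in> elem_fun U" and pos: "\<forall>x\<in>U. g x > 0"
  then have "(\<lambda>x. g x powr (1/2)) \<in> elem_fun U" by (rule elem_fun.powr)
  then show ?thesis by (rule elem_fun.cong) (use pos in \<open>auto simp: powr_half_sqrt\<close>)
qed

lemma elem_fun_has_elem_derivative:
  assumes "open U" "g \<in> elem_fun U"
  shows "\<exists>D. (\<forall>x\<in>U. (g has_derivative D x) (at x)) \<and> (\<forall>v. (\<lambda>x. D x v) \<in> elem_fun U)"
  using assms(2)
proof induction
  case (const c)
  show ?case by (rule exI[of _ "\<lambda>x v. 0"]) (auto intro: elem_fun.const)
next
  case (bounded_linear L)
  show ?case
    by (rule exI[of _ "\<lambda>x. L"])
      (auto intro: elem_fun.const bounded_linear.has_derivative[OF bounded_linear(1)])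
next
  case (add g h)
  then obtain Dg Dh
    where g: "\<forall>x\<in>U. (g has_derivative Dg x) (at x)" "\<forall>v. (\<lambda>x. Dg x v) \<in> elem_fun U"
      and h: "\<forall>x\<in>U. (h has_derivative Dh x) (at x)" "\<forall>v. (\<lambda>x. Dh x v) \<in> elem_fun U"
    by blast
  show ?case
    by (rule exI[of _ "\<lambda>x v. Dg x v + Dh x v"])
      (use g h in \<open>auto intro!: elem_fun.add has_derivative_add\<close>)
next
  case (mult g h)
  then obtain Dg Dh
    where g: "\<forall>x\<in>U. (g has_derivative Dg x) (at x)" "\<forall>v. (\<lambda>x. Dg x v) \<in> elem_fun U"
      and h: "\<forall>x\<in>U. (h has_derivative Dh x) (at x)" "\<forall>v. (\<lambda>x. Dh x v) \<in> elem_fun U"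
    by blast
  show ?case
    by (rule exI[of _ "\<lambda>x v. g x * Dh x v + Dg x v * h x"])
      (use g h mult in \<open>auto intro!: elem_fun.add elem_fun.mult has_derivative_mult\<close>)
next
  case (inverse g)
  then obtain Dg
    where g: "\<forall>x\<in>U. (g has_derivative Dg x) (at x)" "\<forall>v. (\<lambda>x. Dg x v) \<in> elem_fun U"
    by blast
  let ?D = "\<lambda>x v. - (inverse (g x) * Dg x v * inverse (g x))"
  have "((\<lambda>x. inverse (g x)) has_derivative ?D x) (at x)" if "x \<in> U" for x
    using g(1) inverse.hyps(2) that by (auto intro!: has_derivative_inverse)
  moreover have "(\<lambda>x. ?D x v) \<in> elem_fun U" for v
  proof -
    have "(\<lambda>x. (-1) * (inverse (g x) * Dg x v * inverse (g x))) \<in> elem_fun U"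
      using g inverse by (intro elem_fun.mult elem_fun.const elem_fun.inverse) auto
    then show ?thesis by (rule elem_fun.cong) auto
  qed
  ultimately show ?case by (intro exI[of _ ?D]) blast
next
  case (powr g r)
  then obtain Dg
    where g: "\<forall>x\<in>U. (g has_derivative Dg x) (at x)" "\<forall>v. (\<lambda>x. Dg x v) \<in> elem_fun U"
    by blast
  let ?D = "\<lambda>x v. g x powr r * (0 * ln (g x) + Dg x v * r / g x)"
  have "((\<lambda>x. g x powr r) has_derivative ?D x) (at x)" if "x \<in> U" for x
    using has_derivative_powr[OF g(1)[rule_format, OF that] has_derivative_const[of r] _ UNIV_I]
      powr.hyps(2) that
    by auto
  moreover have "(\<lambda>x. ?D x v) \<in> elem_fun U" for v
  proof -
    have "(\<lambda>x. g x powr r * (Dg x v * r * inverse (g x))) \<in> elem_fun U"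
      using powr g by (intro elem_fun.mult elem_fun.const elem_fun.inverse elem_fun.powr) auto
    then show ?thesis by (rule elem_fun.cong) (auto simp: divide_inverse)
  qed
  ultimately show ?case by (intro exI[of _ ?D]) blast
next
  case (cong g h)
  then obtain Dg
    where g: "\<forall>x\<in>U. (g has_derivative Dg x) (at x)" "\<forall>v. (\<lambda>x. Dg x v) \<in> elem_fun U"
    by blast
  have "(h has_derivative Dg x) (at x)" if "x \<in> U" for x
    by (rule has_derivative_transform_within_open[OF g(1)[rule_format, OF that] assms(1) that])
      (use cong.hyps(2) in auto)
  with g show ?case by blast
qed

definition elem_map :: "'a::real_normed_vector set \<Rightarrow> ('a \<Rightarrow> 'b::euclidean_space) set" where
  "elem_map U = {g. \<forall>b\<in>Basis. (\<lambda>x. g x \<bullet> b) \<in> elem_fun U}"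

lemma elem_map_cong: "g \<in> elem_map U \<Longrightarrow> (\<forall>x\<in>U. h x = g x) \<Longrightarrow> h \<in> elem_map U"
  unfolding elem_map_def by (auto intro: elem_fun.cong)

lemma elem_map_has_elem_derivative:
  assumes "open U" "g \<in> elem_map U"
  shows "\<exists>D. (\<forall>x\<in>U. (g has_derivative D x) (at x)) \<and> (\<forall>v. (\<lambda>x. D x v) \<in> elem_map U)"
proof -
  have "\<forall>b\<in>Basis. \<exists>D. (\<forall>x\<in>U. ((\<lambda>x. g x \<bullet> b) has_derivative D x) (at x))
          \<and> (\<forall>v. (\<lambda>x. D x v) \<in> elem_fun U)"
    using assms elem_fun_has_elem_derivative unfolding elem_map_def by blast
  then obtain D where D: "\<And>b. b \<in> Basis \<Longrightarrow> (\<forall>x\<in>U. ((\<lambda>x. g x \<bullet> b) has_derivative D b x) (at x))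
      \<and> (\<forall>v. (\<lambda>x. D b x v) \<in> elem_fun U)"
    by metis
  define E where "E x v = (\<Sum>b\<in>Basis. D b x v *\<^sub>R b)" for x v
  have "(g has_derivative E x) (at x)" if "x \<in> U" for x
  proof -
    have "((\<lambda>y. \<Sum>b\<in>Basis. (g y \<bullet> b) *\<^sub>R b) has_derivative E x) (at x)"
      unfolding E_def using D that by (intro has_derivative_sum has_derivative_scaleR_left) auto
    then show ?thesis by (simp add: euclidean_representation)
  qed
  moreover have "(\<lambda>x. E x v) \<in> elem_map U" for v
  proof -
    have "(\<lambda>x. E x v \<bullet> b) = (\<lambda>x. D b x v)" if "b \<in> Basis" for b
      unfolding E_def using that by (simp add: inner_sum_left inner_Basis if_distrib cong: if_cong)
    then show ?thesis using D unfolding elem_map_def by auto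
  qed
  ultimately show ?thesis by blast
qed

lemma smooth_on_elem_map:
  assumes "open U" "g \<in> elem_map U"
  shows "smooth_on U g"
proof -
  have "dirderivs vs g \<in> elem_map U" for vs
  proof (induction vs)
    case Nil
    then show ?case using assms by simp
  next
    case (Cons v vs)
    obtain D where D: "\<forall>x\<in>U. (dirderivs vs g has_derivative D x) (at x)"
      "\<forall>v. (\<lambda>x. D x v) \<in> elem_map U"
      using elem_map_has_elem_derivative[OF assms(1) Cons] by blast
    show ?case
      by (rule elem_map_cong[OF D(2)[rule_format, of v]]) (use D(1) frechet_derivative_at in force)
  qed
  then show ?thesis
    unfolding smooth_on_def using assms elem_map_has_elem_derivative differentiable_def by blast
qed

lemma continuous_on_elem_map: "open U \<Longrightarrow> g \<in> elem_map U \<Longrightarrow> continuous_on U g"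
  using elem_map_has_elem_derivative[of U g]
  by (metis continuous_at_imp_continuous_on has_derivative_continuous)

lemma elem_map_real_iff: "(g :: 'a::real_normed_vector \<Rightarrow> real) \<in> elem_map U \<longleftrightarrow> g \<in> elem_fun U"
  by (simp add: elem_map_def)

lemma elem_map_complex_iff:
  "(g :: 'a::real_normed_vector \<Rightarrow> complex) \<in> elem_map U
    \<longleftrightarrow> (\<lambda>x. Re (g x)) \<in> elem_fun U \<and> (\<lambda>x. Im (g x)) \<in> elem_fun U"
  by (simp add: elem_map_def Basis_complex_def)

lemma elem_map_prod_iff:
  "(g :: 'a::real_normed_vector \<Rightarrow> 'b::euclidean_space \<times> 'c::euclidean_space) \<in> elem_map U
    \<longleftrightarrow> (\<lambda>x. fst (g x)) \<in> elem_map U \<and> (\<lambda>x. snd (g x)) \<in> elem_map U"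
  by (simp add: elem_map_def Basis_prod_def inner_prod_def ball_Un)

lemma elem_map_vec_iff:
  "(g :: 'a::real_normed_vector \<Rightarrow> real^'n) \<in> elem_map U \<longleftrightarrow> (\<forall>i. (\<lambda>x. g x $ i) \<in> elem_fun U)"
  by (simp add: elem_map_def Basis_vec_def inner_axis)

lemma elem_map_bounded_linear: "bounded_linear L \<Longrightarrow> L \<in> elem_map U"
  unfolding elem_map_def
  by (auto intro!: elem_fun.bounded_linear bounded_linear_inner_left_comp)

lemma elem_map_const: "(\<lambda>x. c) \<in> elem_map U"
  by (simp add: elem_map_def elem_fun.const)

lemma elem_map_diff: "g \<in> elem_map U \<Longrightarrow> h \<in> elem_map U \<Longrightarrow> (\<lambda>x. g x - h x) \<in> elem_map U"
  by (simp add: elem_map_def inner_diff_left elem_fun_diff)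

lemma elem_map_mult:
  fixes g h :: "'a::real_normed_vector \<Rightarrow> complex"
  shows "g \<in> elem_map U \<Longrightarrow> h \<in> elem_map U \<Longrightarrow> (\<lambda>x. g x * h x) \<in> elem_map U"
  by (simp add: elem_map_complex_iff elem_fun_diff elem_fun.add elem_fun.mult)

lemma elem_map_cnj:
  fixes g :: "'a::real_normed_vector \<Rightarrow> complex"
  shows "g \<in> elem_map U \<Longrightarrow> (\<lambda>x. cnj (g x)) \<in> elem_map U"
  by (simp add: elem_map_complex_iff elem_fun_diff[of "\<lambda>x. 0", OF elem_fun.const, simplified])

lemma elem_map_inverse:
  fixes g :: "'a::real_normed_vector \<Rightarrow> complex"
  assumes g: "g \<in> elem_map U" and nz: "\<forall>x\<in>U. g x \<noteq> 0"
  shows "(\<lambda>x. inverse (g x)) \<in> elem_map U"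
proof -
  have re: "(\<lambda>x. Re (g x)) \<in> elem_fun U" and im: "(\<lambda>x. Im (g x)) \<in> elem_fun U"
    using g by (auto simp: elem_map_complex_iff)
  let ?n = "\<lambda>x. Re (g x) * Re (g x) + Im (g x) * Im (g x)"
  have n: "?n \<in> elem_fun U" using re im by (intro elem_fun.add elem_fun.mult)
  have n_nz: "\<forall>x\<in>U. ?n x \<noteq> 0"
    using nz by (auto simp: sum_squares_eq_zero_iff complex_eq_iff)
  have "(\<lambda>x. Re (g x) * inverse (?n x)) \<in> elem_fun U"
    by (intro elem_fun.mult elem_fun.inverse re n n_nz)
  moreover have "(\<lambda>x. (-1) * Im (g x) * inverse (?n x)) \<in> elem_fun U"
    by (intro elem_fun.mult elem_fun.inverse elem_fun.const im n n_nz)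
  ultimately show ?thesis
    unfolding elem_map_complex_iff
    by (auto simp: power2_eq_square divide_inverse elim!: elem_fun.cong)
qed

lemma elem_map_divide:
  fixes g h :: "'a::real_normed_vector \<Rightarrow> complex"
  shows "g \<in> elem_map U \<Longrightarrow> h \<in> elem_map U \<Longrightarrow> \<forall>x\<in>U. h x \<noteq> 0
    \<Longrightarrow> (\<lambda>x. g x / h x) \<in> elem_map U"
  by (simp add: divide_inverse elem_map_mult elem_map_inverse)

lemma elem_fun_cmod:
  assumes g: "g \<in> elem_map U" and nz: "\<forall>x\<in>U. g x \<noteq> 0"
  shows "(\<lambda>x. cmod (g x)) \<in> elem_fun U"
proof -
  let ?n = "\<lambda>x. Re (g x) * Re (g x) + Im (g x) * Im (g x)"
  have "?n \<in> elem_fun U"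
    using g by (auto simp: elem_map_complex_iff intro!: elem_fun.add elem_fun.mult)
  moreover have "\<forall>x\<in>U. ?n x > 0"
    using nz by (auto simp: sum_squares_gt_zero_iff complex_eq_iff)
  ultimately have "(\<lambda>x. sqrt (?n x)) \<in> elem_fun U" by (rule elem_fun_sqrt)
  then show ?thesis by (rule elem_fun.cong) (auto simp: cmod_def power2_eq_square)
qed

lemma diffeo_on_elem_map_inverse:
  fixes h :: "'a::euclidean_space \<Rightarrow> 'b::euclidean_space"
  assumes "open W" "open (h ` W)" "h \<in> elem_map W" "g \<in> elem_map (h ` W)"
    and "\<forall>x\<in>W. g (h x) = x"
  shows "diffeo_on W h"
proof -
  have "inj_on h W" using assms(5) by (metis inj_on_inverseI)
  moreover have "inv_into W h \<in> elem_map (h ` W)"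
    using assms(4,5) \<open>inj_on h W\<close> by (auto intro: elem_map_cong inv_into_f_eq)
  ultimately show ?thesis
    using assms by (simp add: diffeo_on_def smooth_on_elem_map)
qed

section \<open>Disc automorphisms and the pseudo-hyperbolic distance\<close>

lemma mem_unit_disc: "z \<in> unit_disc \<longleftrightarrow> cmod z < 1"
  by (simp add: unit_disc_def)

lemma phi_denom_nonzero:
  assumes "a \<in> unit_disc" "z \<in> unit_disc"
  shows "1 - cnj a * z \<noteq> 0"
proof
  assume "1 - cnj a * z = 0"
  then have "cmod a * cmod z = 1" by (metis complex_mod_cnj eq_iff_diff_eq_0 norm_mult norm_one)
  moreover have "cmod a * cmod z < 1"
    using assms by (metis mem_unit_disc mult_strict_mono' norm_ge_zero mult_1_right)
  ultimately show False by simp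
qed

lemma norm_phi_denom_sq_minus_norm_numer_sq:
  "(cmod (1 - cnj a * z))^2 - (cmod (a - z))^2 = (1 - (cmod a)^2) * (1 - (cmod z)^2)"
  unfolding cmod_power2 by (simp add: algebra_simps power2_eq_square)

lemma phi_in_unit_disc:
  assumes "a \<in> unit_disc" "z \<in> unit_disc"
  shows "phi a z \<in> unit_disc"
proof -
  have "(1 - (cmod a)^2) * (1 - (cmod z)^2) > 0"
    using assms by (intro mult_pos_pos) (auto simp: mem_unit_disc abs_square_less_1)
  then have "(cmod (a - z))^2 < (cmod (1 - cnj a * z))^2"
    using norm_phi_denom_sq_minus_norm_numer_sq[of a z] by linarith
  then have "cmod (a - z) < cmod (1 - cnj a * z)" by (rule power2_less_imp_less) simp
  then show ?thesis
    using phi_denom_nonzero[OF assms] by (simp add: mem_unit_disc phi_def norm_divide divide_less_eq)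
qed

lemma phi_phi:
  assumes "a \<in> unit_disc" "z \<in> unit_disc"
  shows "phi a (phi a z) = z"
proof -
  define d where "d = 1 - cnj a * z"
  have d: "d \<noteq> 0" using phi_denom_nonzero[OF assms] by (simp add: d_def)
  have "cnj a * a = of_real ((cmod a)^2)"
    by (metis complex_norm_square mult.commute of_real_power)
  moreover have "(cmod a)^2 \<noteq> 1"
    using assms(1) abs_square_less_1[of "cmod a"] by (simp add: mem_unit_disc)
  ultimately have d': "1 - cnj a * a \<noteq> 0"
    by (metis eq_iff_diff_eq_0 of_real_eq_1_iff)
  have "a - (a - z) / d = z * (1 - cnj a * a) / d"
    using d by (simp add: field_simps d_def)
  moreover have "1 - cnj a * ((a - z) / d) = (1 - cnj a * a) / d"
    using d by (simp add: field_simps d_def)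
  ultimately show ?thesis
    using d d' by (simp add: phi_def flip: d_def)
qed

lemma phi_eq_0_iff: "a \<in> unit_disc \<Longrightarrow> z \<in> unit_disc \<Longrightarrow> phi a z = 0 \<longleftrightarrow> a = z"
  using phi_denom_nonzero[of a z] by (simp add: phi_def)

lemma norm_phi_commute: "cmod (phi b a) = cmod (phi a b)"
proof -
  have "cmod (1 - cnj b * a) = cmod (1 - cnj a * b)"
    by (metis complex_cnj_cnj complex_cnj_diff complex_cnj_mult complex_cnj_one complex_mod_cnj
        mult.commute)
  then show ?thesis by (simp add: phi_def norm_divide norm_minus_commute)
qed

lemma elem_map_phi:
  assumes "g \<in> elem_map U" "h \<in> elem_map U" "\<forall>x\<in>U. g x \<in> unit_disc \<and> h x \<in> unit_disc"
  shows "(\<lambda>x. phi (g x) (h x)) \<in> elem_map U"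
  unfolding phi_def using assms phi_denom_nonzero
  by (intro elem_map_divide elem_map_diff elem_map_const elem_map_mult elem_map_cnj) auto

definition pdist :: "complex \<times> complex \<Rightarrow> real" where
  "pdist p = cmod (phi (fst p) (snd p))"

definition offdiag :: "(complex \<times> complex) set" where
  "offdiag = {p \<in> unit_disc \<times> unit_disc. fst p \<noteq> snd p}"

lemma pdist_less_1: "p \<in> unit_disc \<times> unit_disc \<Longrightarrow> pdist p < 1"
  using phi_in_unit_disc by (auto simp: pdist_def mem_unit_disc)

lemma pdist_eq_0_iff: "p \<in> unit_disc \<times> unit_disc \<Longrightarrow> pdist p = 0 \<longleftrightarrow> fst p = snd p"
  using phi_eq_0_iff by (auto simp: pdist_def)

lemma pdist_swap: "pdist (snd p, fst p) = pdist p"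
  by (simp add: pdist_def norm_phi_commute)

lemma open_offdiag: "open offdiag"
proof -
  have "offdiag = ball 0 1 \<times> ball 0 1 \<inter> {p. fst p \<noteq> snd p}"
    by (auto simp: offdiag_def unit_disc_def)
  moreover have "open {p :: complex \<times> complex. fst p \<noteq> snd p}"
    by (intro open_Collect_neq continuous_on_fst continuous_on_snd continuous_on_id)
  ultimately show ?thesis by (metis open_Int open_Times open_ball)
qed

lemma offdiag_iff_pdist_pos: "p \<in> offdiag \<longleftrightarrow> p \<in> unit_disc \<times> unit_disc \<and> 0 < pdist p"
  using pdist_eq_0_iff[of p] by (auto simp: offdiag_def pdist_def)

lemma pdist_level_subset_offdiag: "0 < a \<Longrightarrow> {p \<in> unit_disc \<times> unit_disc. pdist p = a} \<subseteq> offdiag"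
  by (auto simp: offdiag_iff_pdist_pos)

lemma elem_map_fst: "fst \<in> elem_map U"
  and elem_map_snd: "snd \<in> elem_map U"
  by (simp_all add: elem_map_bounded_linear bounded_linear_fst bounded_linear_snd)

lemma elem_fun_pdist:
  assumes "U \<subseteq> offdiag"
  shows "pdist \<in> elem_fun U"
proof -
  have "\<forall>p\<in>U. fst p \<in> unit_disc \<and> snd p \<in> unit_disc \<and> phi (fst p) (snd p) \<noteq> 0"
    using assms phi_eq_0_iff by (auto simp: offdiag_def)
  then have "(\<lambda>p. cmod (phi (fst p) (snd p))) \<in> elem_fun U"
    by (intro elem_fun_cmod elem_map_phi elem_map_fst elem_map_snd) auto
  then show ?thesis by (simp add: pdist_def[abs_def])
qed

lemma connected_pdist_level:
  assumes "a < 1"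
  shows "connected {p \<in> unit_disc \<times> unit_disc. pdist p = a}"
proof -
  define \<Psi> where "\<Psi> p = (fst p, phi (fst p) (snd p))" for p
  have "\<Psi> \<in> elem_map (unit_disc \<times> unit_disc)"
    unfolding \<Psi>_def elem_map_prod_iff
    by (auto intro!: elem_map_phi simp: elem_map_fst elem_map_snd)
  then have cont: "continuous_on (unit_disc \<times> unit_disc) \<Psi>"
    by (intro continuous_on_elem_map) (simp_all add: unit_disc_def open_Times)
  have sub: "unit_disc \<times> sphere 0 a \<subseteq> unit_disc \<times> unit_disc"
    using assms by (auto simp: mem_unit_disc)
  have "{p \<in> unit_disc \<times> unit_disc. pdist p = a} = \<Psi> ` (unit_disc \<times> sphere 0 a)"
  proof (intro equalityI subsetI)
    fix p assume p: "p \<in> {p \<in> unit_disc \<times> unit_disc. pdist p = a}"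
    then have "p = \<Psi> (fst p, phi (fst p) (snd p))" "(fst p, phi (fst p) (snd p)) \<in> unit_disc \<times> sphere 0 a"
      using phi_phi by (auto simp: \<Psi>_def pdist_def)
    then show "p \<in> \<Psi> ` (unit_disc \<times> sphere 0 a)" by blast
  next
    fix p assume "p \<in> \<Psi> ` (unit_disc \<times> sphere 0 a)"
    then obtain z w where zw: "p = \<Psi> (z, w)" "z \<in> unit_disc" "w \<in> sphere 0 a" by auto
    then have "w \<in> unit_disc" using sub by blast
    with zw show "p \<in> {p \<in> unit_disc \<times> unit_disc. pdist p = a}"
      using phi_in_unit_disc phi_phi by (auto simp: \<Psi>_def pdist_def)
  qed
  moreover have "connected (unit_disc \<times> sphere (0::complex) a)"
    by (intro connected_Times connected_sphere) (simp_all add: unit_disc_def)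
  ultimately show ?thesis
    using connected_continuous_image continuous_on_subset[OF cont sub] by metis
qed

section \<open>Foliation charts\<close>

lemma surj_derivative_of_right_inverse:
  assumes Dh: "(h has_derivative Dh) (at x)" and Dg: "(g has_derivative Dg) (at (h x))"
    and "g (h x) = x" "open B" "h x \<in> B" "\<forall>y\<in>B. h (g y) = y"
  shows "surj Dh"
proof -
  have "((h \<circ> g) has_derivative (Dh \<circ> Dg)) (at (h x))"
    using diff_chain_at[OF Dg] Dh assms(3) by simp
  moreover have "((h \<circ> g) has_derivative id) (at (h x))"
    by (rule has_derivative_transform_within_open[OF has_derivative_ident[folded id_def] assms(4,5)])
      (use assms(6) in auto)
  ultimately have "Dh \<circ> Dg = id" by (rule has_derivative_unique)
  then have "Dh (Dg y) = y" for y by (simp add: fun_eq_iff)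
  then show ?thesis by (rule surjI)
qed

lemma components_eq_slice:
  fixes h :: "'a::topological_space \<Rightarrow> 'b::real_normed_vector \<times> 'c::real_normed_vector"
  assumes "convex (h ` W)" "continuous_on (h ` W) g" "\<forall>x\<in>W. g (h x) = x"
    and slice: "h ` (A \<inter> W) = {y \<in> h ` W. snd y = c}"
    and C: "C \<in> components (A \<inter> W)"
  shows "h ` C = {y \<in> h ` W. snd y = c}"
proof -
  let ?S = "{y \<in> h ` W. snd y = c}"
  have "convex (snd -` {c} :: ('b \<times> 'c) set)"
    by (rule convex_linear_vimage[OF linear_snd convex_singleton])
  then have "convex (h ` W \<inter> snd -` {c})" using assms(1) by (rule convex_Int[rotated])
  moreover have "?S = h ` W \<inter> snd -` {c}" by auto
  ultimately have "connected ?S" by (simp only: convex_connected)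
  moreover have "continuous_on ?S g"
    using assms(2) by (rule continuous_on_subset) auto
  ultimately have "connected (g ` ?S)" by (rule connected_continuous_image[rotated])
  moreover have "g ` ?S = A \<inter> W"
  proof -
    have "g ` ?S = (\<lambda>x. g (h x)) ` (A \<inter> W)" by (simp only: slice [symmetric] image_image)
    also have "\<dots> = id ` (A \<inter> W)" by (rule image_cong) (use assms(3) in auto)
    finally show ?thesis by simp
  qed
  ultimately have "connected (A \<inter> W)" by (simp only:)
  moreover have "A \<inter> W \<noteq> {}"
    using in_components_nonempty[OF C] in_components_subset[OF C] by blast
  ultimately have "components (A \<inter> W) = {A \<inter> W}" by (rule components_eq_sing_iff[THEN iffD2, OF conjI])
  then show ?thesis using C slice by simp
qed

text \<open>With \<open>w = phi z\<^sub>1 z\<^sub>2\<close>, on the sector around the direction \<open>u\<close> the point \<open>w\<close> is recovered from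
  \<open>t = Im (cnj u * w)\<close> and \<open>\<rho> = |w|\<close> as \<open>u * (sqrt (\<rho>\<^sup>2 - t\<^sup>2) + i t)\<close>, and \<open>z\<^sub>2\<close> from \<open>z\<^sub>2 = phi z\<^sub>1 w\<close>.
  So \<open>(z\<^sub>1, t, \<rho> - s)\<close> are coordinates in which \<open>pdist\<close> is the last one, up to the shift \<open>s\<close>.\<close>

definition rotated_phi :: "complex \<Rightarrow> complex \<times> complex \<Rightarrow> complex" where
  "rotated_phi u p = cnj u * phi (fst p) (snd p)"

definition pdist_chart :: "complex \<Rightarrow> real \<Rightarrow> complex \<times> complex \<Rightarrow> (real^3) \<times> real" where
  "pdist_chart u s p = (vector [Re (fst p), Im (fst p), Im (rotated_phi u p)], pdist p - s)"

definition disc_coord :: "(real^3) \<times> real \<Rightarrow> complex" where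
  "disc_coord y = Complex (fst y $ 1) (fst y $ 2)"

definition sector_coord :: "real \<Rightarrow> (real^3) \<times> real \<Rightarrow> complex" where
  "sector_coord s y = Complex (sqrt ((snd y + s)\<^sup>2 - (fst y $ 3)\<^sup>2)) (fst y $ 3)"

definition pdist_chart_inv :: "complex \<Rightarrow> real \<Rightarrow> (real^3) \<times> real \<Rightarrow> complex \<times> complex" where
  "pdist_chart_inv u s y = (disc_coord y, phi (disc_coord y) (u * sector_coord s y))"

definition pdist_chart_dom :: "complex \<Rightarrow> real \<Rightarrow> (complex \<times> complex) set" where
  "pdist_chart_dom u r = {p \<in> unit_disc \<times> unit_disc.
     0 < Re (rotated_phi u p) \<and> \<bar>Im (rotated_phi u p)\<bar> < r \<and> r < cmod (rotated_phi u p)}"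

definition pdist_chart_cod :: "real \<Rightarrow> real \<Rightarrow> ((real^3) \<times> real) set" where
  "pdist_chart_cod r s = {y. disc_coord y \<in> unit_disc \<and> \<bar>fst y $ 3\<bar> < r \<and> r - s < snd y \<and> snd y < 1 - s}"

lemma elem_map_disc_coord: "disc_coord \<in> elem_map U"
  by (rule elem_map_bounded_linear) (auto simp: disc_coord_def intro!: bounded_linearI' complex_eqI)

lemma convex_pdist_chart_cod: "convex (pdist_chart_cod r s)"
proof -
  have "pdist_chart_cod r s
      = disc_coord -` ball 0 1 \<inter> (\<lambda>y. fst y $ 3) -` {-r<..<r} \<inter> snd -` {r - s<..<1 - s}"
    by (auto simp: pdist_chart_cod_def unit_disc_def)
  moreover have "linear disc_coord"
    by (rule linearI) (auto simp: disc_coord_def complex_eq_iff)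
  ultimately show ?thesis
    by (auto intro!: convex_Int convex_linear_vimage linearI)
qed

lemma open_pdist_chart_cod: "open (pdist_chart_cod r s)"
proof -
  have "continuous_on UNIV disc_coord"
    by (rule continuous_on_elem_map[OF open_UNIV elem_map_disc_coord])
  then show ?thesis
    unfolding pdist_chart_cod_def mem_unit_disc
    by (intro open_Collect_conj open_Collect_less continuous_intros) auto
qed

lemma elem_map_rotated_phi:
  assumes "U \<subseteq> unit_disc \<times> unit_disc"
  shows "rotated_phi u \<in> elem_map U"
  unfolding rotated_phi_def using assms
  by (intro elem_map_mult elem_map_const elem_map_phi elem_map_fst elem_map_snd) auto

lemma open_pdist_chart_dom: "open (pdist_chart_dom u r)"
proof -
  have D: "open (unit_disc \<times> unit_disc)" by (simp add: unit_disc_def open_Times)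
  have "continuous_on (unit_disc \<times> unit_disc) (rotated_phi u)"
    by (rule continuous_on_elem_map[OF D elem_map_rotated_phi]) simp
  moreover have "open {w. 0 < Re w \<and> \<bar>Im w\<bar> < r \<and> r < cmod w}"
    by (intro open_Collect_conj open_Collect_less continuous_intros)
  ultimately have "open (rotated_phi u -` {w. 0 < Re w \<and> \<bar>Im w\<bar> < r \<and> r < cmod w} \<inter> (unit_disc \<times> unit_disc))"
    using D continuous_on_open_vimage by blast
  moreover have "rotated_phi u -` {w. 0 < Re w \<and> \<bar>Im w\<bar> < r \<and> r < cmod w} \<inter> (unit_disc \<times> unit_disc)
      = pdist_chart_dom u r"
    by (auto simp: pdist_chart_dom_def)
  ultimately show ?thesis by simp
qed

lemma pdist_chart_dom_subset: "pdist_chart_dom u r \<subseteq> offdiag"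
  using phi_eq_0_iff by (fastforce simp: pdist_chart_dom_def offdiag_def rotated_phi_def)

lemma cnj_mult_eq_1_if_norm_1: "cmod u = 1 \<Longrightarrow> cnj u * u = 1"
  by (metis complex_norm_square mult.commute of_real_1 power_one)

lemma norm_rotated_phi: "cmod u = 1 \<Longrightarrow> cmod (rotated_phi u p) = pdist p"
  by (simp add: rotated_phi_def pdist_def norm_mult)

lemma sector_radicand_pos:
  assumes "y \<in> pdist_chart_cod r s"
  shows "(snd y + s)\<^sup>2 - (fst y $ 3)\<^sup>2 > 0"
proof -
  have "\<bar>fst y $ 3\<bar> < snd y + s" using assms by (auto simp: pdist_chart_cod_def)
  then have "\<bar>fst y $ 3\<bar>\<^sup>2 < (snd y + s)\<^sup>2" by (intro power_strict_mono) auto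
  then show ?thesis by simp
qed

lemma sector_coord_norm_Re_Im:
  assumes "y \<in> pdist_chart_cod r s"
  shows "cmod (sector_coord s y) = snd y + s" "Re (sector_coord s y) > 0"
    "Im (sector_coord s y) = fst y $ 3"
proof -
  note pos = sector_radicand_pos[OF assms]
  have "\<bar>fst y $ 3\<bar> < snd y + s" using assms by (auto simp: pdist_chart_cod_def)
  have "cmod (sector_coord s y) = sqrt ((sqrt ((snd y + s)\<^sup>2 - (fst y $ 3)\<^sup>2))\<^sup>2 + (fst y $ 3)\<^sup>2)"
    by (simp add: sector_coord_def cmod_def)
  also have "\<dots> = snd y + s" using pos \<open>\<bar>fst y $ 3\<bar> < snd y + s\<close> by simp
  finally show "cmod (sector_coord s y) = snd y + s" .
  show "Re (sector_coord s y) > 0" "Im (sector_coord s y) = fst y $ 3"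
    using pos by (simp_all add: sector_coord_def)
qed

lemma elem_map_pdist_chart: "pdist_chart u s \<in> elem_map (pdist_chart_dom u r)"
proof -
  have sub: "pdist_chart_dom u r \<subseteq> unit_disc \<times> unit_disc"
    by (auto simp: pdist_chart_dom_def)
  have "(\<lambda>p. Re (fst p)) \<in> elem_fun (pdist_chart_dom u r)"
    "(\<lambda>p. Im (fst p)) \<in> elem_fun (pdist_chart_dom u r)"
    "(\<lambda>p. Im (rotated_phi u p)) \<in> elem_fun (pdist_chart_dom u r)"
    using elem_map_fst[of "pdist_chart_dom u r"] elem_map_rotated_phi[OF sub]
    by (auto simp: elem_map_complex_iff)
  then have "(\<lambda>p. vector [Re (fst p), Im (fst p), Im (rotated_phi u p)] $ i :: real)
      \<in> elem_fun (pdist_chart_dom u r)" for i :: 3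
    using exhaust_3[of i] by auto
  moreover have "(\<lambda>p. pdist p - s) \<in> elem_fun (pdist_chart_dom u r)"
    using pdist_chart_dom_subset by (intro elem_fun_diff elem_fun_pdist elem_fun.const)
  ultimately show ?thesis
    by (simp add: pdist_chart_def elem_map_prod_iff elem_map_vec_iff elem_map_real_iff)
qed

context
  fixes u :: complex and r s :: real
  assumes unit: "cmod u = 1"
begin

lemma pdist_chart_inv_in_dom:
  assumes y: "y \<in> pdist_chart_cod r s"
  shows "pdist_chart_inv u s y \<in> pdist_chart_dom u r"
    and "pdist_chart u s (pdist_chart_inv u s y) = y"
proof -
  let ?z = "disc_coord y" and ?w = "u * sector_coord s y"
  have z: "?z \<in> unit_disc" and rho: "r - s < snd y" "snd y < 1 - s"
    using y by (auto simp: pdist_chart_cod_def)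
  have norm_w: "cmod ?w = snd y + s" using sector_coord_norm_Re_Im(1)[OF y] unit by (simp add: norm_mult)
  then have w: "?w \<in> unit_disc" using rho by (simp add: mem_unit_disc)
  have rot: "rotated_phi u (pdist_chart_inv u s y) = sector_coord s y"
    by (simp add: rotated_phi_def pdist_chart_inv_def phi_phi[OF z w] cnj_mult_eq_1_if_norm_1[OF unit]
        mult.assoc[symmetric])
  show "pdist_chart_inv u s y \<in> pdist_chart_dom u r"
    using rot sector_coord_norm_Re_Im[OF y] z phi_in_unit_disc[OF z w] y rho
    by (auto simp: pdist_chart_dom_def pdist_chart_inv_def pdist_chart_cod_def)
  have "fst (pdist_chart u s (pdist_chart_inv u s y)) = fst y"
    unfolding vec_eq_iff forall_3 using rot sector_coord_norm_Re_Im[OF y]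
    by (simp add: pdist_chart_def pdist_chart_inv_def disc_coord_def)
  moreover have "snd (pdist_chart u s (pdist_chart_inv u s y)) = snd y"
    using norm_w by (simp add: pdist_chart_def pdist_chart_inv_def pdist_def phi_phi[OF z w])
  ultimately show "pdist_chart u s (pdist_chart_inv u s y) = y" by (simp add: prod_eq_iff)
qed

lemma pdist_chart_in_cod:
  assumes p: "p \<in> pdist_chart_dom u r"
  shows "pdist_chart u s p \<in> pdist_chart_cod r s"
    and "pdist_chart_inv u s (pdist_chart u s p) = p"
proof -
  let ?w = "rotated_phi u p"
  have D: "fst p \<in> unit_disc" "snd p \<in> unit_disc" and w: "0 < Re ?w" "\<bar>Im ?w\<bar> < r" "r < cmod ?w"
    using p by (auto simp: pdist_chart_dom_def)
  have z: "disc_coord (pdist_chart u s p) = fst p"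
    by (simp add: disc_coord_def pdist_chart_def)
  have "pdist p < 1" using D by (intro pdist_less_1) (simp add: mem_Times_iff)
  then show "pdist_chart u s p \<in> pdist_chart_cod r s"
    using D w norm_rotated_phi[OF unit, of p]
    by (simp add: pdist_chart_cod_def z) (simp add: pdist_chart_def)
  have "(cmod ?w)\<^sup>2 - (Im ?w)\<^sup>2 = (Re ?w)\<^sup>2" by (simp add: cmod_power2)
  then have "sector_coord s (pdist_chart u s p) = ?w"
    using w norm_rotated_phi[OF unit, of p] by (simp add: sector_coord_def pdist_chart_def complex_eq_iff)
  moreover have "u * ?w = phi (fst p) (snd p)"
    using cnj_mult_eq_1_if_norm_1[OF unit] by (simp add: rotated_phi_def mult.assoc[symmetric] mult.commute[of u])
  ultimately show "pdist_chart_inv u s (pdist_chart u s p) = p"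
    by (simp add: pdist_chart_inv_def z phi_phi[OF D])
qed

lemma pdist_chart_image: "pdist_chart u s ` pdist_chart_dom u r = pdist_chart_cod r s"
proof (intro equalityI subsetI)
  fix y assume "y \<in> pdist_chart_cod r s"
  then show "y \<in> pdist_chart u s ` pdist_chart_dom u r"
    using pdist_chart_inv_in_dom by (metis image_eqI)
qed (use pdist_chart_in_cod(1) in auto)

lemma elem_map_pdist_chart_inv: "pdist_chart_inv u s \<in> elem_map (pdist_chart_cod r s)"
proof -
  let ?C = "pdist_chart_cod r s"
  have y3: "(\<lambda>y. fst y $ 3) \<in> elem_fun ?C"
    by (intro elem_fun.bounded_linear bounded_linear_compose[OF bounded_linear_vec_nth bounded_linear_fst])
  have "(\<lambda>y. (snd y + s) * (snd y + s) - fst y $ 3 * fst y $ 3) \<in> elem_fun ?C"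
    by (intro elem_fun_diff elem_fun.add elem_fun.mult elem_fun.const y3
        elem_fun.bounded_linear bounded_linear_snd)
  then have "(\<lambda>y. sqrt ((snd y + s) * (snd y + s) - fst y $ 3 * fst y $ 3)) \<in> elem_fun ?C"
    using sector_radicand_pos by (intro elem_fun_sqrt) (auto simp: power2_eq_square)
  then have "sector_coord s \<in> elem_map ?C"
    using y3 by (auto simp: elem_map_complex_iff sector_coord_def power2_eq_square)
  moreover have "disc_coord y \<in> unit_disc \<and> u * sector_coord s y \<in> unit_disc" if "y \<in> ?C" for y
    using that sector_coord_norm_Re_Im(1)[OF that] unit
    by (auto simp: pdist_chart_cod_def mem_unit_disc norm_mult)
  ultimately show ?thesis
    unfolding pdist_chart_inv_def elem_map_prod_iff
    by (auto intro!: elem_map_phi elem_map_mult elem_map_const elem_map_disc_coord)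
qed

end

lemma pdist_chart_around:
  assumes "p \<in> offdiag"
  obtains u r where "cmod u = 1" "p \<in> pdist_chart_dom u r"
proof -
  let ?w = "phi (fst p) (snd p)"
  have D: "p \<in> unit_disc \<times> unit_disc" and "?w \<noteq> 0"
    using assms phi_eq_0_iff by (auto simp: offdiag_def)
  then have w: "cmod ?w > 0" by simp
  define u where "u = ?w / cmod ?w"
  have "cnj ?w * ?w = of_real ((cmod ?w)\<^sup>2)"
    by (simp add: complex_norm_square mult.commute del: of_real_power)
  then have "rotated_phi u p = cmod ?w"
    using w by (simp add: rotated_phi_def u_def power2_eq_square)
  then have "p \<in> pdist_chart_dom u (cmod ?w / 2)"
    using D w by (simp add: pdist_chart_dom_def)
  moreover have "cmod u = 1" using w by (simp add: u_def norm_divide)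
  ultimately show ?thesis using w that[of u "cmod ?w / 2"] by simp
qed

lemma diffeo_on_pdist_chart:
  assumes "cmod u = 1"
  shows "diffeo_on (pdist_chart_dom u r) (pdist_chart u s)"
  using assms
  by (intro diffeo_on_elem_map_inverse[where g = "pdist_chart_inv u s"])
    (simp_all add: pdist_chart_image open_pdist_chart_dom open_pdist_chart_cod elem_map_pdist_chart
      elem_map_pdist_chart_inv pdist_chart_in_cod)

lemma pdist_chart_image_level:
  "pdist_chart u s ` ({p \<in> unit_disc \<times> unit_disc. pdist p = a} \<inter> pdist_chart_dom u r)
    = {y \<in> pdist_chart u s ` pdist_chart_dom u r. snd y = a - s}"
  by (auto simp: pdist_chart_def pdist_chart_dom_def)

lemma submersion_on_pdist: "submersion_on offdiag pdist"
  unfolding submersion_on_def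
proof (intro conjI ballI)
  show "smooth_on offdiag pdist"
    by (simp add: smooth_on_elem_map open_offdiag elem_map_real_iff elem_fun_pdist)
next
  fix p assume "p \<in> offdiag"
  then obtain u r where u: "cmod u = 1" and p: "p \<in> pdist_chart_dom u r"
    by (rule pdist_chart_around)
  let ?h = "pdist_chart u 0" and ?g = "pdist_chart_inv u 0"
  obtain Dh where Dh: "\<forall>x\<in>pdist_chart_dom u r. (?h has_derivative Dh x) (at x)"
    using elem_map_has_elem_derivative[OF open_pdist_chart_dom elem_map_pdist_chart] by blast
  obtain Dg where Dg: "\<forall>y\<in>pdist_chart_cod r 0. (?g has_derivative Dg y) (at y)"
    using elem_map_has_elem_derivative[OF open_pdist_chart_cod elem_map_pdist_chart_inv[OF u]] by blast
  have hp: "?h p \<in> pdist_chart_cod r 0" and gh: "?g (?h p) = p"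
    using pdist_chart_in_cod[OF u p] by simp_all
  have "surj (Dh p)"
    using Dh p Dg hp gh open_pdist_chart_cod pdist_chart_inv_in_dom(2)[OF u]
    by (intro surj_derivative_of_right_inverse[where g = ?g and B = "pdist_chart_cod r 0"]) auto
  have "((\<lambda>x. snd (?h x)) has_derivative (\<lambda>v. snd (Dh p v))) (at p)"
    using Dh p by (intro has_derivative_snd) simp
  then have "(pdist has_derivative (\<lambda>v. snd (Dh p v))) (at p)"
    by (rule has_derivative_transform_within_open[OF _ open_pdist_chart_dom p])
      (simp add: pdist_chart_def)
  then have "frechet_derivative pdist (at p) = (\<lambda>v. snd (Dh p v))"
    by (simp add: frechet_derivative_at[symmetric])
  then show "surj (frechet_derivative pdist (at p))"
    using \<open>surj (Dh p)\<close> by (metis snd_conv surj_def)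
qed

lemma foliation_pdist_levels:
  "foliation offdiag ((\<lambda>a. {p \<in> unit_disc \<times> unit_disc. pdist p = a}) ` {0<..<1})
     TYPE(real^3) TYPE(real)"
  (is "foliation _ (?L ` _) _ _")
  unfolding foliation_def
proof (intro conjI)
  show "open offdiag" by (rule open_offdiag)
  show "\<Union> (?L ` {0<..<1}) = offdiag"
    using pdist_less_1 by (auto simp: offdiag_iff_pdist_pos)
  show "\<forall>A\<in>?L ` {0<..<1}. \<forall>B\<in>?L ` {0<..<1}. A \<noteq> B \<longrightarrow> A \<inter> B = {}" by auto
  show "\<forall>A\<in>?L ` {0<..<1}. A \<noteq> {} \<and> connected A"
  proof
    fix A assume "A \<in> ?L ` {0<..<1}"
    then obtain a where a: "0 < a" "a < 1" and A: "A = ?L a" by auto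
    have "(0, of_real a) \<in> A" using a by (simp add: A pdist_def phi_def mem_unit_disc)
    then show "A \<noteq> {} \<and> connected A" using connected_pdist_level[OF a(2)] A by auto
  qed
  show "\<forall>p\<in>offdiag. \<exists>W (h :: _ \<Rightarrow> (real^3) \<times> real). p \<in> W \<and> W \<subseteq> offdiag \<and> diffeo_on W h
      \<and> convex (h ` W)
      \<and> (\<forall>A\<in>?L ` {0<..<1}. \<forall>C\<in>components (A \<inter> W). \<exists>c. h ` C = {y \<in> h ` W. snd y = c})"
  proof
    fix p assume "p \<in> offdiag"
    then obtain u r where u: "cmod u = 1" and p: "p \<in> pdist_chart_dom u r"
      by (rule pdist_chart_around)
    let ?W = "pdist_chart_dom u r" and ?h = "pdist_chart u 0" and ?g = "pdist_chart_inv u 0"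
    have convex: "convex (?h ` ?W)"
      by (simp add: pdist_chart_image[OF u] convex_pdist_chart_cod)
    have cont: "continuous_on (?h ` ?W) ?g"
      unfolding pdist_chart_image[OF u]
      by (rule continuous_on_elem_map[OF open_pdist_chart_cod elem_map_pdist_chart_inv[OF u]])
    have inv: "\<forall>x\<in>?W. ?g (?h x) = x"
      using pdist_chart_in_cod(2)[OF u] by blast
    have slice: "?h ` (?L a \<inter> ?W) = {y \<in> ?h ` ?W. snd y = a}" for a
      using pdist_chart_image_level[of u 0 a r] by simp
    have "?h ` C = {y \<in> ?h ` ?W. snd y = a}" if "C \<in> components (?L a \<inter> ?W)" for a C
      by (rule components_eq_slice[OF convex cont inv slice that])
    then show "\<exists>W (h :: _ \<Rightarrow> (real^3) \<times> real). p \<in> W \<and> W \<subseteq> offdiag \<and> diffeo_on W h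
      \<and> convex (h ` W)
      \<and> (\<forall>A\<in>?L ` {0<..<1}. \<forall>C\<in>components (A \<inter> W). \<exists>c. h ` C = {y \<in> h ` W. snd y = c})"
      using p pdist_chart_dom_subset diffeo_on_pdist_chart[OF u] convex
      by (intro exI[of _ ?W] exI[of _ ?h]) auto
  qed
qed

lemma embedded_submanifold_pdist_level:
  assumes "0 < a"
  shows "embedded_submanifold {p \<in> unit_disc \<times> unit_disc. pdist p = a} TYPE(real^3) TYPE(real)"
  unfolding embedded_submanifold_def
proof
  fix p assume "p \<in> {p \<in> unit_disc \<times> unit_disc. pdist p = a}"
  then have "p \<in> offdiag" using pdist_level_subset_offdiag[OF assms] by blast
  then obtain u r where u: "cmod u = 1" and p: "p \<in> pdist_chart_dom u r"
    by (rule pdist_chart_around)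
  show "\<exists>W (h :: _ \<Rightarrow> (real^3) \<times> real). p \<in> W \<and> diffeo_on W h
      \<and> h ` ({p \<in> unit_disc \<times> unit_disc. pdist p = a} \<inter> W) = {y \<in> h ` W. snd y = 0}"
    using p diffeo_on_pdist_chart[OF u] pdist_chart_image_level[of u a a r]
    by (intro exI[of _ "pdist_chart_dom u r"] exI[of _ "pdist_chart u a"]) simp
qed

section \<open>The swap action\<close>

lemma invariant_under_swap:
  "(\<And>p. p \<in> X \<Longrightarrow> (snd p, fst p) \<in> X) \<Longrightarrow> invariant_under {1, -1} swap_act X"
  by (auto simp: invariant_under_def swap_act_def)

lemma free_action_swap:
  "(\<And>p. p \<in> X \<Longrightarrow> fst p \<noteq> snd p) \<Longrightarrow> free_action {1, -1} 1 swap_act X"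
  by (auto simp: free_action_def swap_act_def prod_eq_iff)

lemma properly_discontinuous_action_swap:
  assumes "\<And>p. p \<in> X \<Longrightarrow> fst p \<noteq> snd p"
  shows "properly_discontinuous_action {1, -1} 1 swap_act X"
  unfolding properly_discontinuous_action_def
proof
  fix x assume "x \<in> X"
  define r where "r = dist (fst x) (snd x) / 2"
  have "r > 0" using assms[OF \<open>x \<in> X\<close>] by (simp add: r_def)
  have "(snd y, fst y) \<notin> ball x r" if "y \<in> ball x r" for y
  proof
    assume "(snd y, fst y) \<in> ball x r"
    then have "dist (fst x) (snd y) < r"
      using dist_fst_le[of x "(snd y, fst y)"] by simp
    moreover have "dist (snd x) (snd y) < r"
      using that dist_snd_le[of x y] by simp
    ultimately have "dist (fst x) (snd x) < 2 * r"
      using dist_triangle3[of "fst x" "snd x" "snd y"] by (simp add: dist_commute)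
    then show False by (simp add: r_def)
  qed
  then have "swap_act g ` (X \<inter> ball x r) \<inter> (X \<inter> ball x r) = {}" if "g \<in> {1, -1}" "g \<noteq> 1" for g
    using that by (auto simp: swap_act_def)
  then show "\<exists>V. openin (top_of_set X) V \<and> x \<in> V
      \<and> (\<forall>g\<in>{1, -1}. g \<noteq> 1 \<longrightarrow> swap_act g ` V \<inter> V = {})"
    using \<open>x \<in> X\<close> \<open>r > 0\<close> by (intro exI[of _ "X \<inter> ball x r"]) (auto intro: openin_open_Int)
qed

theorem lemma2p5:
  fixes f :: "complex \<times> complex \<Rightarrow> real"
    and Diag U :: "(complex \<times> complex) set"
    and F :: "real \<Rightarrow> (complex \<times> complex) set"
  defines "f \<equiv> (\<lambda>(z1, z2). cmod (phi z1 z2))"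
    and "Diag \<equiv> {(z, z) | z. z \<in> unit_disc}"
    and "U \<equiv> unit_disc \<times> unit_disc - Diag"
    and "F \<equiv> (\<lambda>a. {p \<in> unit_disc \<times> unit_disc. f p = a})"
  shows "f ` (unit_disc \<times> unit_disc) \<subseteq> {0..<1}
    \<and> f ` U \<subseteq> {0<..<1} \<and> submersion_on U f
    \<and> foliation U (F ` {0<..<1}) TYPE(real^3) TYPE(real)
    \<and> (\<forall>a\<in>{0<..<1}. embedded_submanifold (F a) TYPE(real^3) TYPE(real))
    \<and> (\<forall>a\<in>{0<..<1}. invariant_under {1, -1} swap_act (F a)
           \<and> free_action {1, -1} 1 swap_act (F a)
           \<and> properly_discontinuous_action {1, -1} 1 swap_act (F a))"
proof -
  have f: "f = pdist" by (simp add: f_def pdist_def fun_eq_iff)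
  have U: "U = offdiag" by (auto simp: U_def Diag_def offdiag_def)
  have F: "F a = {p \<in> unit_disc \<times> unit_disc. pdist p = a}" for a by (simp add: F_def f)
  have "pdist ` (unit_disc \<times> unit_disc) \<subseteq> {0..<1}"
    using pdist_less_1 by (auto simp: pdist_def)
  moreover have "pdist ` offdiag \<subseteq> {0<..<1}"
    using pdist_less_1 by (auto simp: offdiag_iff_pdist_pos)
  moreover have "invariant_under {1, -1} swap_act (F a)" for a
    by (rule invariant_under_swap) (auto simp: F pdist_swap)
  moreover have "free_action {1, -1} 1 swap_act (F a)"
    and "properly_discontinuous_action {1, -1} 1 swap_act (F a)" if "0 < a" for a
    using pdist_level_subset_offdiag[OF that]
    by (auto simp: F offdiag_def intro!: free_action_swap properly_discontinuous_action_swap)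
  ultimately show ?thesis
    using submersion_on_pdist foliation_pdist_levels embedded_submanifold_pdist_level
    by (simp add: f U F[abs_def])
qed

end
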